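(* Let $X$ be a complete nonsingular toric variety which is Fano and all of whose toric subvarieties are Fano. If a ray generator $\rho$ of the fan of $X$ is equal to a nonnegative linear combination of ray generators other than $\rho$, then the toric divisor $D$ associated to $\rho$ is exceptional.
   Context: For such $X$ (fan $\Delta$ in $N_{\mathbb R}$, ray generators $\rho$ corresponding to toric divisors $D$), a primitive set is a set $\{D_1,\ldots,D_k\}$ of toric divisors with empty intersection such that every proper subset has nonempty intersection (equivalently, $\rho_1,\ldots,\rho_k$ do not span a cone but every proper subset does). For these $X$, every primitive set satisfies either $\rho_1+\cdots+\rho_k=0$ or $\rho_1+\cdots+\rho_k=\widehat\rho$ for a ray generator $\widehat\rho$. A toric divisor $\widehat D$ is called exceptional if $\rho_1+\cdots+\rho_k=\widehat\rho$ for some primitive set $\{D_1,\ldots,D_k\}$. *)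

theory Defs
  imports "HOL-Analysis.Analysis"
begin

text \<open>The lattice N is the integer points of N_R = real^'n; dim N = CARD('n).
  A fan is given by its finite set R of ray generators and the set Sigma of its cones,
  each cone being identified with the (finite) set of ray generators spanning it.\<close>

definition int_vec :: "real^'n \<Rightarrow> bool" where
  "int_vec x \<longleftrightarrow> (\<forall>i. x $ i \<in> \<int>)"

definition pos_hull :: "(real^'n) set \<Rightarrow> (real^'n) set" where
  "pos_hull S = {\<Sum>v\<in>S. c v *\<^sub>R v | c. \<forall>v\<in>S. c v \<ge> 0}"

definition lattice_basis :: "(real^'n) set \<Rightarrow> bool" where
  "lattice_basis B \<longleftrightarrow> finite B \<and> independent B \<and> card B = CARD('n) \<and>
     (\<forall>v\<in>B. int_vec v) \<and>
     (\<forall>x. int_vec x \<longrightarrow> (\<exists>c. (\<forall>v\<in>B. c v \<in> \<int>) \<and> x = (\<Sum>v\<in>B. c v *\<^sub>R v)))"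

text \<open>Fan of a complete nonsingular toric variety: every cone is a face of a maximal cone
  whose generators form a lattice basis (smoothness), cones meet along common faces (fan),
  and the cones cover N_R (completeness).\<close>
definition smooth_complete_fan :: "(real^'n) set \<Rightarrow> (real^'n) set set \<Rightarrow> bool" where
  "smooth_complete_fan R \<Sigma> \<longleftrightarrow>
     finite R \<and> (\<forall>\<rho>\<in>R. int_vec \<rho>) \<and>
     \<Sigma> \<subseteq> Pow R \<and> {} \<in> \<Sigma> \<and> (\<forall>\<rho>\<in>R. {\<rho>} \<in> \<Sigma>) \<and>
     (\<forall>C\<in>\<Sigma>. \<forall>C'. C' \<subseteq> C \<longrightarrow> C' \<in> \<Sigma>) \<and>
     (\<forall>C\<in>\<Sigma>. \<exists>\<sigma>\<in>\<Sigma>. C \<subseteq> \<sigma> \<and> lattice_basis \<sigma>) \<and>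
     (\<forall>C\<in>\<Sigma>. \<forall>C'\<in>\<Sigma>. pos_hull C \<inter> pos_hull C' = pos_hull (C \<inter> C')) \<and>
     (\<Union>C\<in>\<Sigma>. pos_hull C) = UNIV"

definition max_cone :: "(real^'n) set set \<Rightarrow> (real^'n) set \<Rightarrow> bool" where
  "max_cone \<Sigma> \<sigma> \<longleftrightarrow> \<sigma> \<in> \<Sigma> \<and> card \<sigma> = CARD('n)"

text \<open>The orbit closure V(tau) (a smooth complete toric variety with fan Star(tau) in
  N/span(tau)) is Fano: its anticanonical divisor is ample, i.e. the support function is
  strictly convex.\<close>
definition orbit_closure_fano :: "(real^'n) set \<Rightarrow> (real^'n) set set \<Rightarrow> (real^'n) set \<Rightarrow> bool" where
  "orbit_closure_fano R \<Sigma> \<tau> \<longleftrightarrow>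
     (\<forall>\<sigma>. max_cone \<Sigma> \<sigma> \<and> \<tau> \<subseteq> \<sigma> \<longrightarrow>
        (\<exists>m::real^'n. (\<forall>\<rho>\<in>\<tau>. m \<bullet> \<rho> = 0) \<and> (\<forall>\<rho>\<in>\<sigma> - \<tau>. m \<bullet> \<rho> = 1) \<and>
           (\<forall>\<rho>\<in>R. \<rho> \<notin> \<sigma> \<and> insert \<rho> \<tau> \<in> \<Sigma> \<longrightarrow> m \<bullet> \<rho> < 1)))"

definition toric_fano :: "(real^'n) set \<Rightarrow> (real^'n) set set \<Rightarrow> bool" where
  "toric_fano R \<Sigma> \<longleftrightarrow> orbit_closure_fano R \<Sigma> {}"

definition all_toric_subvarieties_fano :: "(real^'n) set \<Rightarrow> (real^'n) set set \<Rightarrow> bool" where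
  "all_toric_subvarieties_fano R \<Sigma> \<longleftrightarrow> (\<forall>\<tau>\<in>\<Sigma>. orbit_closure_fano R \<Sigma> \<tau>)"

definition primitive_set :: "(real^'n) set \<Rightarrow> (real^'n) set set \<Rightarrow> (real^'n) set \<Rightarrow> bool" where
  "primitive_set R \<Sigma> P \<longleftrightarrow> P \<subseteq> R \<and> P \<notin> \<Sigma> \<and> (\<forall>Q. Q \<subset> P \<longrightarrow> Q \<in> \<Sigma>)"

definition exceptional :: "(real^'n) set \<Rightarrow> (real^'n) set set \<Rightarrow> real^'n \<Rightarrow> bool" where
  "exceptional R \<Sigma> \<rho> \<longleftrightarrow> \<rho> \<in> R \<and> (\<exists>P. primitive_set R \<Sigma> P \<and> (\<Sum>v\<in>P. v) = \<rho>)"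

end

(*
  Write rho as a nonnegative combination of the other ray generators of minimal total weight
  and let S be its support. S spans no cone (rho would be a relative interior point of a cone
  not containing it), so S contains a primitive set P. Since X and all its orbit closures are
  Fano, sum P is 0 or a single ray generator y. Unless sum P = rho, subtracting t * sum P and
  adding t * y, where t is the least coefficient on P, gives a cheaper representation of rho.

  The dichotomy for sum P is shown for the primitive collections P of every star Star(tau), by
  induction on |P|. Modulo span tau, sum P lies in the relative interior of a cone of Star(tau)
  with positive integral coordinates, and one shows that their sum, the weight, is at most 1.
  The Fano functional m of V(tau) evaluates the weight as the sum of m x over P, where m x <= 1.
  For |P| = 2 one of the two values is < 1, so the integral weight is < 2. For |P| > 2 the relation of P - {x} in Star(tau u {x}) either has a
  nonnegative coefficient at x, and then bounds the weight of P, or forces m x < 0 for all x.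
*)
theory Submission
  imports Defs
begin

section \<open>Nonnegative combinations\<close>

lemma independent_sum_coeffs_eq:
  fixes B :: "'a::real_vector set"
  assumes "finite B" "independent B" "(\<Sum>v\<in>B. f v *\<^sub>R v) = (\<Sum>v\<in>B. g v *\<^sub>R v)" "v \<in> B"
  shows "f v = g v"
proof (rule ccontr)
  assume "f v \<noteq> g v"
  moreover have "(\<Sum>v\<in>B. (f v - g v) *\<^sub>R v) = 0"
    using assms(3) by (simp add: scaleR_diff_left sum_subtractf)
  ultimately have "dependent B"
    using assms(1,4) by (subst dependent_finite[OF assms(1)]) (auto intro!: exI[of _ "\<lambda>v. f v - g v"])
  then show False using assms(2) by simp
qed

lemma sum_scaleR_if_subset:
  fixes h :: "'a \<Rightarrow> 'b::real_vector"
  assumes "finite S" "D \<subseteq> S"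
  shows "(\<Sum>v\<in>S. (if v \<in> D then d v else 0) *\<^sub>R h v) = (\<Sum>v\<in>D. d v *\<^sub>R h v)"
proof -
  have "(\<Sum>v\<in>S. (if v \<in> D then d v else 0) *\<^sub>R h v) = (\<Sum>v\<in>S. if v \<in> D then d v *\<^sub>R h v else 0)"
    by (rule sum.cong) auto
  also have "\<dots> = (\<Sum>v\<in>D. d v *\<^sub>R h v)"
    using assms by (simp add: sum.inter_restrict[symmetric] Int_absorb1)
  finally show ?thesis .
qed

lemma sum_scaleR_shift:
  fixes h :: "'a \<Rightarrow> 'b::real_vector"
  assumes "finite E" "\<tau> \<subseteq> E"
  shows "(\<Sum>v\<in>E. (a v + (if v \<in> \<tau> then N else 0)) *\<^sub>R h v) = (\<Sum>v\<in>E. a v *\<^sub>R h v) + N *\<^sub>R (\<Sum>v\<in>\<tau>. h v)"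
  using sum_scaleR_if_subset[OF assms, of "\<lambda>_. N" h]
  by (simp add: scaleR_add_left sum.distrib scaleR_sum_right)

lemma nonneg_if_nonneg_at_unbounded:
  fixes a b :: real
  assumes "\<And>n::nat. \<exists>N\<ge>n. 0 \<le> b + real N * a"
  shows "0 \<le> a"
proof (rule ccontr)
  assume "\<not> 0 \<le> a"
  then obtain n :: nat where n: "b < real n * - a" using ex_less_of_nat_mult[of "- a" b] by auto
  obtain N where "n \<le> N" "0 \<le> b + real N * a" using assms by blast
  moreover have "real n * - a \<le> real N * - a" using \<open>n \<le> N\<close> \<open>\<not> 0 \<le> a\<close> by (intro mult_right_mono) auto
  ultimately show False using n by linarith
qed

lemma independent_coeffs_affine:
  fixes C :: "'a::real_vector set"
  assumes "finite C" "independent C" "s \<in> I" "t \<in> I" "s \<noteq> t"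
    and g: "\<And>r. r \<in> I \<Longrightarrow> p + r *\<^sub>R u = (\<Sum>v\<in>C. g r v *\<^sub>R v)"
  obtains \<alpha> \<beta> where "u = (\<Sum>v\<in>C. \<alpha> v *\<^sub>R v)" "p = (\<Sum>v\<in>C. \<beta> v *\<^sub>R v)"
    "\<And>r v. r \<in> I \<Longrightarrow> v \<in> C \<Longrightarrow> g r v = \<beta> v + r * \<alpha> v"
proof -
  define \<alpha> where "\<alpha> v = (g t v - g s v) / (t - s)" for v
  define \<beta> where "\<beta> v = g s v - s * \<alpha> v" for v
  have "(t - s) *\<^sub>R u = (p + t *\<^sub>R u) - (p + s *\<^sub>R u)"
    by (simp add: algebra_simps)
  also have "\<dots> = (\<Sum>v\<in>C. (g t v - g s v) *\<^sub>R v)"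
    unfolding g[OF assms(3)] g[OF assms(4)] by (simp add: scaleR_diff_left sum_subtractf)
  finally have diff: "(t - s) *\<^sub>R u = (\<Sum>v\<in>C. (g t v - g s v) *\<^sub>R v)" .
  have "u = inverse (t - s) *\<^sub>R ((t - s) *\<^sub>R u)" using assms(5) by simp
  then have u: "u = (\<Sum>v\<in>C. \<alpha> v *\<^sub>R v)"
    unfolding diff by (simp add: \<alpha>_def scaleR_sum_right divide_inverse ac_simps)
  have "p = (p + s *\<^sub>R u) - s *\<^sub>R u" by simp
  also have "\<dots> = (\<Sum>v\<in>C. \<beta> v *\<^sub>R v)"
    unfolding g[OF assms(3)] \<beta>_def using u by (simp add: scaleR_diff_left sum_subtractf scaleR_sum_right)
  finally have p: "p = (\<Sum>v\<in>C. \<beta> v *\<^sub>R v)" .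
  have "g r v = \<beta> v + r * \<alpha> v" if "r \<in> I" "v \<in> C" for r v
  proof -
    have "p + r *\<^sub>R u = (\<Sum>v\<in>C. (\<beta> v + r * \<alpha> v) *\<^sub>R v)"
      by (subst p, subst u) (simp add: scaleR_add_left sum.distrib scaleR_sum_right)
    then have "(\<Sum>v\<in>C. (\<beta> v + r * \<alpha> v) *\<^sub>R v) = (\<Sum>v\<in>C. g r v *\<^sub>R v)"
      unfolding g[OF that(1)] by (rule sym)
    from independent_sum_coeffs_eq[OF assms(1,2) this that(2)] show ?thesis by (rule sym)
  qed
  then show thesis by (rule that[OF u p])
qed

lemma pos_Ints_sum_le_1_cases:
  fixes d :: "'a \<Rightarrow> real"
  assumes "finite D" "\<forall>v\<in>D. d v \<in> \<int> \<and> 0 < d v" "sum d D \<le> 1"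
  shows "D = {} \<or> (\<exists>y. D = {y} \<and> d y = 1)"
proof (cases "D = {}")
  case False
  then obtain y where "y \<in> D" by blast
  have ge_1: "1 \<le> d v" if "v \<in> D" for v using assms(2) that Ints_nonzero_abs_ge1[of "d v"] by auto
  have "D - {y} = {}"
  proof (rule ccontr)
    assume "D - {y} \<noteq> {}"
    then obtain z where "z \<in> D - {y}" by blast
    then have "d z \<le> sum d (D - {y})"
      using assms(1) ge_1 by (intro member_le_sum) (auto intro: order_trans[OF zero_le_one])
    moreover have "1 \<le> d y" "1 \<le> d z" using ge_1 \<open>y \<in> D\<close> \<open>z \<in> D - {y}\<close> by auto
    ultimately show False
      using sum.remove[OF assms(1) \<open>y \<in> D\<close>, of d] assms(3) by linarith
  qed
  then have "D = {y}" using \<open>y \<in> D\<close> by blast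
  then show ?thesis using assms(3) ge_1 by force
qed simp

lemma zero_or_member_repr_weight_le_1:
  fixes S :: "'a::real_vector set"
  assumes "finite S" "p = 0 \<or> p \<in> S"
  obtains e where "\<forall>v\<in>S. 0 \<le> e v" "p = (\<Sum>v\<in>S. e v *\<^sub>R v)" "sum e S \<le> 1"
proof (cases "p = 0")
  case True
  then show thesis using that[of "\<lambda>_. 0"] by simp
next
  case False
  then have "p \<in> S" using assms(2) by blast
  then show thesis
    using that[of "\<lambda>v. if v \<in> {p} then 1 else 0"] sum_scaleR_if_subset[OF assms(1), of "{p}" "\<lambda>_. 1" id]
      assms(1) by (simp add: sum.If_cases)
qed

lemma convex_cone_hull_finite:
  fixes S :: "'a::real_vector set"
  assumes "finite S"
  shows "convex_cone hull S = {\<Sum>v\<in>S. c v *\<^sub>R v | c. \<forall>v\<in>S. 0 \<le> c v}" (is "_ = ?K")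
proof
  have "x \<in> ?K" if "x \<in> S" for x
    using sum_scaleR_if_subset[OF assms, of "{x}" "\<lambda>_. 1" id] that
    by (intro CollectI exI[of _ "\<lambda>v. if v \<in> {x} then 1 else 0"]) auto
  moreover have "convex_cone ?K"
    unfolding convex_cone_iff
  proof (intro conjI ballI allI impI)
    show "0 \<in> ?K" by (intro CollectI exI[of _ "\<lambda>_. 0"]) simp
    fix x y assume "x \<in> ?K" "y \<in> ?K"
    then obtain c c' where "\<forall>v\<in>S. 0 \<le> c v" "\<forall>v\<in>S. 0 \<le> c' v"
      "x = (\<Sum>v\<in>S. c v *\<^sub>R v)" "y = (\<Sum>v\<in>S. c' v *\<^sub>R v)" by blast
    then show "x + y \<in> ?K"
      by (auto intro!: exI[of _ "\<lambda>v. c v + c' v"] simp: scaleR_add_left sum.distrib)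
  next
    fix x and a :: real assume "x \<in> ?K" "0 \<le> a"
    then obtain c where "\<forall>v\<in>S. 0 \<le> c v" "x = (\<Sum>v\<in>S. c v *\<^sub>R v)" by blast
    with \<open>0 \<le> a\<close> show "a *\<^sub>R x \<in> ?K"
      by (auto intro!: exI[of _ "\<lambda>v. a * c v"] simp: scaleR_sum_right)
  qed
  ultimately show "convex_cone hull S \<subseteq> ?K" by (intro hull_minimal) auto
next
  show "?K \<subseteq> convex_cone hull S"
  proof clarify
    fix c :: "'a \<Rightarrow> real" assume c: "\<forall>v\<in>S. 0 \<le> c v"
    have "(\<Sum>v\<in>T. c v *\<^sub>R v) \<in> convex_cone hull S" if "T \<subseteq> S" for T
      using finite_subset[OF that assms] that
      by (induction T rule: finite_induct)
        (simp_all add: convex_cone_hull_contains_0 convex_cone_hull_add convex_cone_hull_mul hull_inc c)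
    then show "(\<Sum>v\<in>S. c v *\<^sub>R v) \<in> convex_cone hull S" by blast
  qed
qed

(* The weights form the fibre over p of the finitely generated cone spanned by the (v, 1). *)
lemma closed_repr_weights:
  fixes S :: "'a::euclidean_space set"
  assumes "finite S"
  shows "closed {sum c S | c. (\<forall>v\<in>S. 0 \<le> c v) \<and> (\<Sum>v\<in>S. c v *\<^sub>R v) = p}"
proof -
  define lift where "lift v = (v, 1::real)" for v :: 'a
  have inj: "inj_on lift S" by (auto simp: lift_def inj_on_def)
  have lifted_sum: "(\<Sum>w\<in>lift ` S. c w *\<^sub>R w) =
      ((\<Sum>v\<in>S. c (lift v) *\<^sub>R v), sum (c \<circ> lift) S)" for c
    unfolding sum.reindex[OF inj] by (simp add: lift_def prod_eq_iff fst_sum snd_sum)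
  have "{sum c S | c. (\<forall>v\<in>S. 0 \<le> c v) \<and> (\<Sum>v\<in>S. c v *\<^sub>R v) = p} =
      (\<lambda>t. (p, t)) -` (convex_cone hull (lift ` S))"
  proof (intro set_eqI iffI)
    fix t assume "t \<in> {sum c S | c. (\<forall>v\<in>S. 0 \<le> c v) \<and> (\<Sum>v\<in>S. c v *\<^sub>R v) = p}"
    then obtain c where "\<forall>v\<in>S. 0 \<le> c v" "(\<Sum>v\<in>S. c v *\<^sub>R v) = p" "t = sum c S" by blast
    moreover have "(p, t) = (\<Sum>w\<in>lift ` S. (c \<circ> fst) w *\<^sub>R w)"
      using calculation unfolding lifted_sum by (simp add: lift_def o_def)
    ultimately show "t \<in> (\<lambda>t. (p, t)) -` (convex_cone hull (lift ` S))"
      using assms by (auto simp: convex_cone_hull_finite lift_def)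
  next
    fix t assume "t \<in> (\<lambda>t. (p, t)) -` (convex_cone hull (lift ` S))"
    then obtain c where "\<forall>w\<in>lift ` S. 0 \<le> c w" "(p, t) = (\<Sum>w\<in>lift ` S. c w *\<^sub>R w)"
      using assms by (simp add: convex_cone_hull_finite) blast
    then show "t \<in> {sum c S | c. (\<forall>v\<in>S. 0 \<le> c v) \<and> (\<Sum>v\<in>S. c v *\<^sub>R v) = p}"
      unfolding lifted_sum by (auto intro!: exI[of _ "c \<circ> lift"])
  qed
  moreover have "closed ((\<lambda>t. (p, t)) -` (convex_cone hull (lift ` S)))"
    using assms by (intro continuous_closed_vimage closed_convex_cone_hull continuous_intros) auto
  ultimately show ?thesis by simp
qed

lemma exists_min_weight_repr:
  fixes S :: "'a::euclidean_space set"
  assumes "finite S" "\<forall>v\<in>S. 0 \<le> c0 v" "(\<Sum>v\<in>S. c0 v *\<^sub>R v) = p"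
  obtains c where "\<forall>v\<in>S. 0 \<le> c v" "(\<Sum>v\<in>S. c v *\<^sub>R v) = p"
    "\<And>c'. \<forall>v\<in>S. 0 \<le> c' v \<Longrightarrow> (\<Sum>v\<in>S. c' v *\<^sub>R v) = p \<Longrightarrow> sum c S \<le> sum c' S"
proof -
  define W where "W = {sum c S | c. (\<forall>v\<in>S. 0 \<le> c v) \<and> (\<Sum>v\<in>S. c v *\<^sub>R v) = p}"
  have "W \<noteq> {}" using assms(2,3) unfolding W_def by blast
  moreover have "bdd_below W" unfolding W_def by (auto intro!: bdd_belowI[of _ 0] sum_nonneg)
  moreover have "closed W" unfolding W_def by (rule closed_repr_weights[OF assms(1)])
  ultimately have "Inf W \<in> W" by (rule closed_contains_Inf)
  moreover have "\<exists>c. (\<forall>v\<in>S. 0 \<le> c v) \<and> (\<Sum>v\<in>S. c v *\<^sub>R v) = p \<and> sum c S = t" if "t \<in> W" for t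
    using that unfolding W_def by blast
  ultimately obtain c where "\<forall>v\<in>S. 0 \<le> c v" "(\<Sum>v\<in>S. c v *\<^sub>R v) = p" "sum c S = Inf W"
    by blast
  moreover have "Inf W \<le> sum c' S" if "\<forall>v\<in>S. 0 \<le> c' v" "(\<Sum>v\<in>S. c' v *\<^sub>R v) = p" for c'
    using that \<open>bdd_below W\<close> by (intro cInf_lower) (auto simp: W_def)
  ultimately show thesis using that by auto
qed

(* Trading t * sum P for t * (sum e v v), with t the least coefficient on P, keeps the
   combination nonnegative and changes its weight by t * (sum e - |P|). *)
lemma min_weight_repr_subset_weight_ge_card:
  fixes S :: "'a::real_vector set" and e :: "'a \<Rightarrow> real"
  assumes "finite S" "\<forall>v\<in>S. 0 \<le> c v" "(\<Sum>v\<in>S. c v *\<^sub>R v) = p"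
    and min: "\<And>c'. \<forall>v\<in>S. 0 \<le> c' v \<Longrightarrow> (\<Sum>v\<in>S. c' v *\<^sub>R v) = p \<Longrightarrow> sum c S \<le> sum c' S"
    and "P \<subseteq> S" "\<forall>v\<in>P. 0 < c v" "\<forall>v\<in>S. 0 \<le> e v" "(\<Sum>x\<in>P. x) = (\<Sum>v\<in>S. e v *\<^sub>R v)"
  shows "real (card P) \<le> sum e S"
proof (rule ccontr)
  assume "\<not> real (card P) \<le> sum e S"
  then have "finite P" "P \<noteq> {}"
    using assms(1,5,7) finite_subset sum_nonneg[of S e] by fastforce+
  define t where "t = Min (c ` P)"
  have "t \<in> c ` P" unfolding t_def using \<open>finite P\<close> \<open>P \<noteq> {}\<close> by simp
  then have "0 < t" using assms(6) by auto
  have t_le: "t \<le> c v" if "v \<in> P" for v unfolding t_def using \<open>finite P\<close> that by simp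
  define c' where "c' v = c v - (if v \<in> P then t else 0) + t * e v" for v
  have "\<forall>v\<in>S. 0 \<le> c' v"
    using assms(2,7) t_le \<open>0 < t\<close> by (auto simp: c'_def)
  moreover have "(\<Sum>v\<in>S. c' v *\<^sub>R v) = p - t *\<^sub>R (\<Sum>x\<in>P. x) + t *\<^sub>R (\<Sum>v\<in>S. e v *\<^sub>R v)"
    using sum_scaleR_if_subset[OF assms(1,5), of "\<lambda>_. t" id] assms(3)
    by (simp add: c'_def scaleR_add_left scaleR_diff_left sum.distrib sum_subtractf scaleR_sum_right)
  ultimately have "sum c S \<le> sum c' S" using min assms(8) by simp
  moreover have "sum c' S = sum c S - t * card P + t * sum e S"
    using assms(1,5) by (simp add: c'_def sum.distrib sum_subtractf sum_distrib_left
        sum.inter_restrict[symmetric] Int_absorb1)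
  moreover have "t * sum e S < t * card P" using \<open>\<not> real (card P) \<le> sum e S\<close> \<open>0 < t\<close> by simp
  ultimately show False by linarith
qed

lemma pos_hullI: "\<forall>v\<in>S. 0 \<le> c v \<Longrightarrow> (\<Sum>v\<in>S. c v *\<^sub>R v) \<in> pos_hull S"
  unfolding pos_hull_def by blast

lemma pos_hull_ray_coeffs:
  fixes C :: "(real^'n) set"
  assumes "finite C" "independent C" "infinite {N::nat. p + real N *\<^sub>R u \<in> pos_hull C}"
  obtains \<alpha> \<beta> where "u = (\<Sum>v\<in>C. \<alpha> v *\<^sub>R v)" "p = (\<Sum>v\<in>C. \<beta> v *\<^sub>R v)"
    "\<forall>v\<in>C. 0 \<le> \<alpha> v" "\<forall>v\<in>C. \<alpha> v = 0 \<longrightarrow> 0 \<le> \<beta> v"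
proof -
  define I where "I = {N::nat. p + real N *\<^sub>R u \<in> pos_hull C}"
  have unbounded: "\<exists>N\<in>I. n \<le> N" for n
    using assms(3) unfolding I_def[symmetric] infinite_nat_iff_unbounded_le by blast
  then obtain N1 N2 where N: "N1 \<in> I" "N2 \<in> I" "N1 < N2"
    by (metis Suc_le_eq)
  have "\<forall>r\<in>real ` I. \<exists>g. (\<forall>v\<in>C. 0 \<le> g v) \<and> p + r *\<^sub>R u = (\<Sum>v\<in>C. g v *\<^sub>R v)"
    unfolding I_def pos_hull_def by blast
  then obtain g where g: "\<forall>r\<in>real ` I. (\<forall>v\<in>C. 0 \<le> g r v) \<and> p + r *\<^sub>R u = (\<Sum>v\<in>C. g r v *\<^sub>R v)"
    by (rule bchoice[THEN exE])
  moreover have "real N1 \<in> real ` I" "real N2 \<in> real ` I" "real N1 \<noteq> real N2" using N by auto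
  ultimately obtain \<alpha> \<beta> where u: "u = (\<Sum>v\<in>C. \<alpha> v *\<^sub>R v)" and p: "p = (\<Sum>v\<in>C. \<beta> v *\<^sub>R v)"
    and g_eq: "\<And>r v. r \<in> real ` I \<Longrightarrow> v \<in> C \<Longrightarrow> g r v = \<beta> v + r * \<alpha> v"
    using independent_coeffs_affine[OF assms(1,2), of "real N1" "real ` I" "real N2" p u g] by blast
  have nonneg: "0 \<le> \<beta> v + real N * \<alpha> v" if "N \<in> I" "v \<in> C" for N v
  proof -
    have "0 \<le> g (real N) v" using g that by blast
    then show ?thesis using g_eq[of "real N" v] that by simp
  qed
  have "\<forall>v\<in>C. 0 \<le> \<alpha> v"
    using nonneg_if_nonneg_at_unbounded unbounded nonneg by meson
  moreover have "0 \<le> \<beta> v" if "v \<in> C" "\<alpha> v = 0" for v using nonneg[OF N(1) that(1)] that(2) by simp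
  ultimately show thesis using that u p by blast
qed

lemma int_vec_sum:
  assumes "\<forall>x\<in>P. int_vec x"
  shows "int_vec (\<Sum>x\<in>P. x)"
  using assms unfolding int_vec_def by (auto simp: sum_component intro!: Ints_sum)

lemma lattice_basis_int_coeffs:
  assumes "lattice_basis \<sigma>" "int_vec p" "D \<subseteq> \<sigma>" "p = (\<Sum>v\<in>D. d v *\<^sub>R v)" "v \<in> D"
  shows "d v \<in> \<int>"
proof -
  have "finite \<sigma>" "independent \<sigma>" using assms(1) unfolding lattice_basis_def by auto
  obtain c where c: "\<forall>v\<in>\<sigma>. c v \<in> \<int>" "p = (\<Sum>v\<in>\<sigma>. c v *\<^sub>R v)"
    using assms(1,2) unfolding lattice_basis_def by blast
  have "(\<Sum>v\<in>\<sigma>. (if v \<in> D then d v else 0) *\<^sub>R v) = (\<Sum>v\<in>\<sigma>. c v *\<^sub>R v)"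
    using sum_scaleR_if_subset[OF \<open>finite \<sigma>\<close> assms(3), of d id] assms(4) c(2) by simp
  from independent_sum_coeffs_eq[OF \<open>finite \<sigma>\<close> \<open>independent \<sigma>\<close> this] assms(3,5)
  have "(if v \<in> D then d v else 0) = c v" by blast
  then show ?thesis using c(1) assms(3,5) by auto
qed

section \<open>Smooth complete fans\<close>

locale smooth_fan =
  fixes R :: "(real^'n) set" and \<Sigma> :: "(real^'n) set set"
  assumes smooth_complete_fan: "smooth_complete_fan R \<Sigma>"
begin

lemmas fan_conditions = smooth_complete_fan[unfolded smooth_complete_fan_def]

lemma finite_rays: "finite R"
  using fan_conditions by (elim conjE)

lemma int_vec_ray: "\<rho> \<in> R \<Longrightarrow> int_vec \<rho>"
  using fan_conditions by (elim conjE) blast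

lemma cone_subset_rays: "C \<in> \<Sigma> \<Longrightarrow> C \<subseteq> R"
  using fan_conditions by (elim conjE) blast

lemma empty_cone: "{} \<in> \<Sigma>"
  using fan_conditions by (elim conjE)

lemma singleton_cone: "\<rho> \<in> R \<Longrightarrow> {\<rho>} \<in> \<Sigma>"
  using fan_conditions by (elim conjE) blast

lemma face_cone: "C \<in> \<Sigma> \<Longrightarrow> C' \<subseteq> C \<Longrightarrow> C' \<in> \<Sigma>"
  using fan_conditions by (elim conjE) blast

lemma cone_subset_lattice_basis: "C \<in> \<Sigma> \<Longrightarrow> \<exists>\<sigma>\<in>\<Sigma>. C \<subseteq> \<sigma> \<and> lattice_basis \<sigma>"
  using fan_conditions by (elim conjE) simp

lemma pos_hull_Int: "C \<in> \<Sigma> \<Longrightarrow> C' \<in> \<Sigma> \<Longrightarrow> pos_hull C \<inter> pos_hull C' = pos_hull (C \<inter> C')"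
  using fan_conditions by (elim conjE) simp

lemma pos_hull_cover: "\<exists>C\<in>\<Sigma>. x \<in> pos_hull C"
proof -
  have "x \<in> (\<Union>C\<in>\<Sigma>. pos_hull C)" using fan_conditions by (elim conjE) simp
  then show ?thesis by blast
qed

lemma finite_cones: "finite \<Sigma>"
  using cone_subset_rays finite_rays by (meson PowI finite_Pow_iff finite_subset subsetI)

lemma finite_cone: "C \<in> \<Sigma> \<Longrightarrow> finite C"
  using cone_subset_rays finite_rays finite_subset by blast

lemma independent_cone: "C \<in> \<Sigma> \<Longrightarrow> independent C"
  using cone_subset_lattice_basis independent_mono unfolding lattice_basis_def by blast

lemma relint_mem_pos_hull_imp_subset:
  assumes "E1 \<in> \<Sigma>" "E2 \<in> \<Sigma>" "\<forall>v\<in>E1. 0 < a v" "(\<Sum>v\<in>E1. a v *\<^sub>R v) \<in> pos_hull E2"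
  shows "E1 \<subseteq> E2"
proof
  fix v assume "v \<in> E1"
  let ?p = "\<Sum>v\<in>E1. a v *\<^sub>R v"
  have "?p \<in> pos_hull E1" using assms(3) by (intro pos_hullI) (simp add: less_imp_le)
  then have "?p \<in> pos_hull (E1 \<inter> E2)" using pos_hull_Int assms(1,2,4) by blast
  then obtain g where g: "?p = (\<Sum>v\<in>E1 \<inter> E2. g v *\<^sub>R v)" unfolding pos_hull_def by auto
  have fin: "finite E1" and ind: "independent E1" using assms(1) finite_cone independent_cone by auto
  have "?p = (\<Sum>v\<in>E1. (if v \<in> E1 \<inter> E2 then g v else 0) *\<^sub>R v)"
    using sum_scaleR_if_subset[OF fin, of "E1 \<inter> E2" g id] g by auto
  from independent_sum_coeffs_eq[OF fin ind this \<open>v \<in> E1\<close>]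
  have "a v = (if v \<in> E1 \<inter> E2 then g v else 0)" .
  then show "v \<in> E2" using assms(3) \<open>v \<in> E1\<close> by (auto split: if_splits)
qed

lemma ray_notin_pos_hull_cone:
  assumes "\<rho> \<in> R" "C \<in> \<Sigma>" "\<rho> \<notin> C"
  shows "\<rho> \<notin> pos_hull C"
  using relint_mem_pos_hull_imp_subset[OF singleton_cone[OF assms(1)] assms(2), of "\<lambda>_. 1"] assms(3)
  by auto

lemma star_relint_imp_subset:
  assumes "E1 \<in> \<Sigma>" "E2 \<in> \<Sigma>" "\<tau> \<subseteq> E1" "\<tau> \<subseteq> E2"
    and "\<forall>v\<in>E1 - \<tau>. 0 < a v" "\<forall>v\<in>E2 - \<tau>. 0 \<le> b v"
    and "(\<Sum>v\<in>E1. a v *\<^sub>R v) = (\<Sum>v\<in>E2. b v *\<^sub>R v)"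
  shows "E1 \<subseteq> E2"
proof -
  have fin: "finite E1" "finite E2" using assms(1,2) finite_cone by auto
  then have "bdd_above ((\<lambda>v. \<bar>a v\<bar> + \<bar>b v\<bar>) ` \<tau>)"
    using finite_subset[OF assms(3)] by simp
  then obtain M where M: "\<forall>v\<in>\<tau>. \<bar>a v\<bar> + \<bar>b v\<bar> \<le> M"
    by (auto simp: bdd_above_def)
  define shift where "shift c v = c v + (if v \<in> \<tau> then M + 1 else 0)" for c :: "real^'n \<Rightarrow> real" and v
  have pos: "\<forall>v\<in>E1. 0 < shift a v" and nonneg: "\<forall>v\<in>E2. 0 \<le> shift b v"
    using assms(5,6) M by (fastforce simp: shift_def)+
  have "(\<Sum>v\<in>E1. shift a v *\<^sub>R v) = (\<Sum>v\<in>E2. shift b v *\<^sub>R v)"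
    unfolding shift_def sum_scaleR_shift[OF fin(1) assms(3)] sum_scaleR_shift[OF fin(2) assms(4)]
    using assms(7) by simp
  then have "(\<Sum>v\<in>E1. shift a v *\<^sub>R v) \<in> pos_hull E2" using pos_hullI[OF nonneg] by simp
  then show ?thesis by (rule relint_mem_pos_hull_imp_subset[OF assms(1,2) pos])
qed

(* p, read in N_R / span tau, lies in the relative interior of the cone of Star(tau) spanned by
   D - tau; the weight of the representation is the sum of d over D - tau. *)
definition star_repr :: "(real^'n) set \<Rightarrow> real^'n \<Rightarrow> (real^'n) set \<Rightarrow> (real^'n \<Rightarrow> real) \<Rightarrow> bool" where
  "star_repr \<tau> p D d \<longleftrightarrow> D \<in> \<Sigma> \<and> \<tau> \<subseteq> D \<and> p = (\<Sum>v\<in>D. d v *\<^sub>R v) \<and> (\<forall>v\<in>D - \<tau>. 0 < d v)"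

lemma cone_with_infinitely_many_ray_points: "\<exists>C\<in>\<Sigma>. infinite {N::nat. p + real N *\<^sub>R u \<in> pos_hull C}"
proof (rule ccontr)
  assume "\<not> ?thesis"
  then have "finite (\<Union>C\<in>\<Sigma>. {N::nat. p + real N *\<^sub>R u \<in> pos_hull C})"
    by (intro finite_UN_I finite_cones) blast
  moreover have "(\<Union>C\<in>\<Sigma>. {N::nat. p + real N *\<^sub>R u \<in> pos_hull C}) = UNIV"
    using pos_hull_cover by blast
  ultimately show False by simp
qed

(* For infinitely many N, p + N * (sum tau) lies in one cone C; letting N grow forces tau
   into C. *)
lemma exists_star_repr:
  assumes "\<tau> \<in> \<Sigma>"
  obtains D d where "star_repr \<tau> p D d"
proof -
  define u where "u = (\<Sum>v\<in>\<tau>. v)"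
  obtain C where C: "C \<in> \<Sigma>" "infinite {N::nat. p + real N *\<^sub>R u \<in> pos_hull C}"
    using cone_with_infinitely_many_ray_points by blast
  have fin: "finite C" and ind: "independent C" using C(1) finite_cone independent_cone by auto
  obtain \<alpha> \<beta> where \<alpha>: "u = (\<Sum>v\<in>C. \<alpha> v *\<^sub>R v)" "\<forall>v\<in>C. 0 \<le> \<alpha> v"
    and \<beta>: "p = (\<Sum>v\<in>C. \<beta> v *\<^sub>R v)" "\<forall>v\<in>C. \<alpha> v = 0 \<longrightarrow> 0 \<le> \<beta> v"
    using pos_hull_ray_coeffs[OF fin ind C(2)] by blast
  have "u \<in> pos_hull C" unfolding \<alpha>(1) by (rule pos_hullI[OF \<alpha>(2)])
  then have "\<tau> \<subseteq> C"
    using relint_mem_pos_hull_imp_subset[OF assms C(1), of "\<lambda>_. 1"] unfolding u_def by simp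
  then have u_indicator: "(\<Sum>v\<in>C. \<alpha> v *\<^sub>R v) = (\<Sum>v\<in>C. (if v \<in> \<tau> then 1 else 0) *\<^sub>R v)"
    using sum_scaleR_if_subset[OF fin, of \<tau> "\<lambda>_. 1" id] \<alpha>(1) unfolding u_def by simp
  have \<alpha>_indicator: "\<alpha> v = (if v \<in> \<tau> then 1 else 0)" if "v \<in> C" for v
    using independent_sum_coeffs_eq[OF fin ind u_indicator that] .
  define D where "D = {v\<in>C. v \<in> \<tau> \<or> 0 < \<beta> v}"
  have "p = (\<Sum>v\<in>D. \<beta> v *\<^sub>R v)"
    unfolding \<beta>(1) using \<beta>(2) \<alpha>_indicator
    by (intro sum.mono_neutral_right[OF fin]) (fastforce simp: D_def)+
  moreover have "D \<in> \<Sigma>" using face_cone[OF C(1)] by (auto simp: D_def)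
  ultimately have "star_repr \<tau> p D \<beta>"
    using \<open>\<tau> \<subseteq> C\<close> by (auto simp: star_repr_def D_def)
  then show thesis using that by blast
qed

lemma star_repr_coeffs_eq:
  assumes repr: "star_repr \<tau> p D d" and E: "E \<in> \<Sigma>" "\<tau> \<subseteq> E"
    and b: "p = (\<Sum>v\<in>E. b v *\<^sub>R v)" "\<forall>v\<in>E - \<tau>. 0 \<le> b v"
  shows "D \<subseteq> E" "\<forall>v\<in>D. d v = b v"
proof -
  have D: "D \<in> \<Sigma>" "\<tau> \<subseteq> D" "p = (\<Sum>v\<in>D. d v *\<^sub>R v)" "\<forall>v\<in>D - \<tau>. 0 < d v"
    using repr unfolding star_repr_def by blast+
  have "(\<Sum>v\<in>D. d v *\<^sub>R v) = (\<Sum>v\<in>E. b v *\<^sub>R v)" using D(3) b(1) by simp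
  then show "D \<subseteq> E" by (rule star_relint_imp_subset[OF D(1) E(1) D(2) E(2) D(4) b(2)])
  then have "(\<Sum>v\<in>E. (if v \<in> D then d v else 0) *\<^sub>R v) = (\<Sum>v\<in>E. b v *\<^sub>R v)"
    using sum_scaleR_if_subset[OF finite_cone[OF E(1)], of D d id] D(3) b(1) by simp
  from independent_sum_coeffs_eq[OF finite_cone[OF E(1)] independent_cone[OF E(1)] this]
  show "\<forall>v\<in>D. d v = b v"
    using \<open>D \<subseteq> E\<close> by fastforce
qed

lemma star_repr_int_coeffs:
  assumes "star_repr \<tau> (\<Sum>x\<in>P. x) D d" "P \<subseteq> R" "v \<in> D"
  shows "d v \<in> \<int>"
proof -
  obtain \<sigma> where "D \<subseteq> \<sigma>" "lattice_basis \<sigma>"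
    using assms(1) cone_subset_lattice_basis unfolding star_repr_def by blast
  moreover have "int_vec (\<Sum>x\<in>P. x)" using int_vec_sum int_vec_ray assms(2) by blast
  ultimately show ?thesis using lattice_basis_int_coeffs assms(1,3) unfolding star_repr_def by blast
qed

lemma exists_primitive_subset:
  assumes "S \<subseteq> R" "S \<notin> \<Sigma>"
  obtains P where "P \<subseteq> S" "primitive_set R \<Sigma> P"
proof -
  have "\<exists>P. (P \<subseteq> S \<and> P \<notin> \<Sigma>) \<and> (\<forall>Q. Q \<subseteq> S \<and> Q \<notin> \<Sigma> \<longrightarrow> card P \<le> card Q)"
    using ex_has_least_nat[of "\<lambda>P. P \<subseteq> S \<and> P \<notin> \<Sigma>" S card] assms(2) by simp
  then obtain P where P: "P \<subseteq> S" "P \<notin> \<Sigma>" and min: "\<forall>Q. Q \<subseteq> S \<and> Q \<notin> \<Sigma> \<longrightarrow> card P \<le> card Q"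
    by blast
  have "finite P" using finite_subset[OF subset_trans[OF P(1) assms(1)] finite_rays] .
  have "Q \<in> \<Sigma>" if "Q \<subset> P" for Q
  proof (rule ccontr)
    assume "Q \<notin> \<Sigma>"
    then have "card P \<le> card Q" using min that P(1) by blast
    then show False using psubset_card_mono[OF \<open>finite P\<close> that] by linarith
  qed
  moreover have "P \<subseteq> R" using P(1) assms(1) by blast
  ultimately have "primitive_set R \<Sigma> P" using P(2) unfolding primitive_set_def by blast
  then show thesis using that P(1) by blast
qed

lemma exists_primitive_subset_of_support:
  assumes "\<rho> \<in> R" "S \<subseteq> R - {\<rho>}" "\<forall>v\<in>S. 0 \<le> c v" "(\<Sum>v\<in>S. c v *\<^sub>R v) = \<rho>"
  obtains P where "P \<subseteq> S" "primitive_set R \<Sigma> P"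
proof -
  have "\<rho> \<in> pos_hull S" using pos_hullI[OF assms(3)] assms(4) by simp
  then have "S \<notin> \<Sigma>" using ray_notin_pos_hull_cone[OF assms(1)] assms(2) by blast
  then show thesis using exists_primitive_subset assms(2) that by blast
qed

lemma primitive_set_card_ge_2:
  assumes "primitive_set R \<Sigma> P"
  shows "2 \<le> card P"
proof -
  have "P \<subseteq> R" "P \<notin> \<Sigma>" using assms unfolding primitive_set_def by blast+
  then have "finite P" "P \<noteq> {}" "\<forall>x. P \<noteq> {x}"
    using finite_rays finite_subset empty_cone singleton_cone by blast+
  then show ?thesis
    by (metis One_nat_def card_1_singletonE card_0_eq less_2_cases not_le)
qed

(* P is a primitive collection of the fan Star(tau). *)
definition star_primitive :: "(real^'n) set \<Rightarrow> (real^'n) set \<Rightarrow> bool" where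
  "star_primitive \<tau> P \<longleftrightarrow> \<tau> \<in> \<Sigma> \<and> P \<subseteq> R \<and> P \<inter> \<tau> = {} \<and> P \<union> \<tau> \<notin> \<Sigma> \<and> (\<forall>Q. Q \<subset> P \<longrightarrow> Q \<union> \<tau> \<in> \<Sigma>)"

lemma primitive_set_iff_star_primitive: "primitive_set R \<Sigma> P \<longleftrightarrow> star_primitive {} P"
  unfolding primitive_set_def star_primitive_def using empty_cone by simp

lemma star_primitive_finite: "star_primitive \<tau> P \<Longrightarrow> finite P"
  unfolding star_primitive_def using finite_rays finite_subset by blast

lemma star_primitive_insert_cone:
  assumes "star_primitive \<tau> P" "2 \<le> card P" "x \<in> P"
  shows "x \<notin> \<tau>" "insert x \<tau> \<in> \<Sigma>"
proof -
  have "P \<noteq> {x}" using assms(2) by auto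
  then have "{x} \<subset> P" using assms(3) by blast
  then show "x \<notin> \<tau>" "insert x \<tau> \<in> \<Sigma>" using assms(1,3) unfolding star_primitive_def by auto
qed

lemma star_primitive_remove:
  assumes "star_primitive \<tau> P" "2 \<le> card P" "x \<in> P"
  shows "star_primitive (insert x \<tau>) (P - {x})"
  unfolding star_primitive_def
proof (intro conjI allI impI)
  show "insert x \<tau> \<in> \<Sigma>" using star_primitive_insert_cone[OF assms] by blast
  show "P - {x} \<subseteq> R" "(P - {x}) \<inter> insert x \<tau> = {}"
    using assms(1) unfolding star_primitive_def by auto
  have "(P - {x}) \<union> insert x \<tau> = P \<union> \<tau>" using assms(3) by auto
  then show "(P - {x}) \<union> insert x \<tau> \<notin> \<Sigma>" using assms(1) unfolding star_primitive_def by simp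
next
  fix Q assume "Q \<subset> P - {x}"
  then have "insert x Q \<subset> P" using assms(3) by auto
  moreover have "Q \<union> insert x \<tau> = insert x Q \<union> \<tau>" by auto
  ultimately show "Q \<union> insert x \<tau> \<in> \<Sigma>" using assms(1) unfolding star_primitive_def by metis
qed

(* For x in P and D the coordinate d x is a positive integer, so sum P - x, a relative interior
   point of the cone (P - {x}) u tau, also lies in the cone D; then P u tau is a face of D. *)
lemma star_primitive_disjoint_star_repr:
  assumes prim: "star_primitive \<tau> P" and repr: "star_repr \<tau> (\<Sum>x\<in>P. x) D d"
  shows "P \<inter> D = {}"
proof (rule ccontr)
  assume "P \<inter> D \<noteq> {}"
  then obtain x where x: "x \<in> P" "x \<in> D" by blast
  have "P \<subseteq> R" "x \<notin> \<tau>" using prim x(1) unfolding star_primitive_def by auto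
  have D: "D \<in> \<Sigma>" "\<tau> \<subseteq> D" "finite D" "0 < d x"
    using repr x(2) \<open>x \<notin> \<tau>\<close> finite_cone unfolding star_repr_def by auto
  have "1 \<le> d x"
    using star_repr_int_coeffs[OF repr \<open>P \<subseteq> R\<close> x(2)] D(4) Ints_nonzero_abs_ge1[of "d x"] by simp
  define E where "E = (P - {x}) \<union> \<tau>"
  have "P - {x} \<subset> P" using x(1) by blast
  then have "E \<in> \<Sigma>" using prim unfolding E_def star_primitive_def by blast
  moreover have "(\<Sum>y\<in>P. y) - x = (\<Sum>v\<in>E. (if v \<in> P - {x} then 1 else 0) *\<^sub>R v)"
    using sum_scaleR_if_subset[OF finite_cone[OF \<open>E \<in> \<Sigma>\<close>], of "P - {x}" "\<lambda>_. 1" id]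
      sum_diff1[OF star_primitive_finite[OF prim], of "\<lambda>v. v"] x(1) by (simp add: E_def)
  ultimately have "star_repr \<tau> ((\<Sum>y\<in>P. y) - x) E (\<lambda>v. if v \<in> P - {x} then 1 else 0)"
    unfolding star_repr_def by (auto simp: E_def)
  moreover have "(\<Sum>y\<in>P. y) - x = (\<Sum>v\<in>D. (d v - (if v \<in> {x} then 1 else 0)) *\<^sub>R v)"
    using sum_scaleR_if_subset[OF D(3), of "{x}" "\<lambda>_. 1" id] repr x(2)
    by (simp add: star_repr_def scaleR_diff_left sum_subtractf)
  moreover have "\<forall>v\<in>D - \<tau>. 0 \<le> d v - (if v \<in> {x} then 1 else 0)"
    using repr \<open>1 \<le> d x\<close> by (auto simp: star_repr_def less_imp_le)
  ultimately have "E \<subseteq> D" by (rule star_repr_coeffs_eq(1)[OF _ D(1,2)])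
  then have "P \<union> \<tau> \<subseteq> D" using x(2) unfolding E_def by blast
  then show False using face_cone[OF D(1)] prim unfolding star_primitive_def by blast
qed

lemma star_primitive_weight_le_1_of_remove:
  assumes prim: "star_primitive \<tau> P" "2 \<le> card P" "x \<in> P"
    and repr: "star_repr \<tau> (\<Sum>y\<in>P. y) D d"
    and repr_x: "star_repr (insert x \<tau>) (\<Sum>y\<in>P - {x}. y) E e"
    and weight_x: "(\<Sum>v\<in>E - insert x \<tau>. e v) \<le> 1" and "0 \<le> 1 + e x"
  shows "(\<Sum>v\<in>D - \<tau>. d v) \<le> 1"
proof -
  have E: "E \<in> \<Sigma>" "insert x \<tau> \<subseteq> E" "finite E" using repr_x finite_cone unfolding star_repr_def by auto
  define b where "b v = e v + (if v \<in> {x} then 1 else 0)" for v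
  have "(\<Sum>y\<in>P. y) = x + (\<Sum>y\<in>P - {x}. y)"
    using sum.remove[OF star_primitive_finite[OF prim(1)] prim(3), of "\<lambda>y. y"] by simp
  also have "\<dots> = (\<Sum>v\<in>E. b v *\<^sub>R v)"
    using repr_x sum_scaleR_if_subset[OF E(3), of "{x}" "\<lambda>_. 1" id] E(2)
    by (simp add: b_def star_repr_def scaleR_add_left sum.distrib)
  finally have b_sum: "(\<Sum>y\<in>P. y) = (\<Sum>v\<in>E. b v *\<^sub>R v)" .
  have b_nonneg: "\<forall>v\<in>E - \<tau>. 0 \<le> b v"
    using repr_x \<open>0 \<le> 1 + e x\<close> by (auto simp: b_def star_repr_def less_imp_le)
  have "D \<subseteq> E" "\<forall>v\<in>D. d v = b v"
    using star_repr_coeffs_eq[OF repr E(1) _ b_sum b_nonneg] E(2) by blast+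
  moreover have "x \<notin> D" using star_primitive_disjoint_star_repr[OF prim(1) repr] prim(3) by blast
  ultimately have sub: "D - \<tau> \<subseteq> E - insert x \<tau>" and eq: "\<forall>v\<in>D - \<tau>. d v = e v"
    by (auto simp: b_def)
  have "(\<Sum>v\<in>D - \<tau>. d v) = (\<Sum>v\<in>D - \<tau>. e v)" using eq by simp
  also have "\<dots> \<le> (\<Sum>v\<in>E - insert x \<tau>. e v)"
    using repr_x E(3) sub by (intro sum_mono2) (auto simp: star_repr_def less_imp_le)
  finally show ?thesis using weight_x by linarith
qed

end

section \<open>Primitive relations on Fano fans\<close>

locale fano_fan = smooth_fan +
  assumes all_fano: "all_toric_subvarieties_fano R \<Sigma>"
begin

lemma fano_functional:
  assumes "\<tau> \<in> \<Sigma>" "max_cone \<Sigma> \<sigma>" "\<tau> \<subseteq> \<sigma>"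
  obtains m where "\<forall>v\<in>\<tau>. m \<bullet> v = 0" "\<forall>v\<in>\<sigma> - \<tau>. m \<bullet> v = 1"
    "\<forall>v\<in>R. v \<notin> \<tau> \<and> insert v \<tau> \<in> \<Sigma> \<longrightarrow> m \<bullet> v \<le> 1"
    "\<forall>v\<in>R. v \<notin> \<sigma> \<and> insert v \<tau> \<in> \<Sigma> \<longrightarrow> m \<bullet> v < 1"
proof -
  obtain m where m: "\<forall>v\<in>\<tau>. m \<bullet> v = 0" "\<forall>v\<in>\<sigma> - \<tau>. m \<bullet> v = 1"
    "\<forall>v\<in>R. v \<notin> \<sigma> \<and> insert v \<tau> \<in> \<Sigma> \<longrightarrow> m \<bullet> v < 1"
    using all_fano assms unfolding all_toric_subvarieties_fano_def orbit_closure_fano_def by blast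
  moreover have "\<forall>v\<in>R. v \<notin> \<tau> \<and> insert v \<tau> \<in> \<Sigma> \<longrightarrow> m \<bullet> v \<le> 1"
    using m by (metis Diff_iff less_eq_real_def order_refl)
  ultimately show thesis using that by blast
qed

lemma star_primitive_fano_functional:
  assumes prim: "star_primitive \<tau> P" and repr: "star_repr \<tau> (\<Sum>x\<in>P. x) D d"
  obtains \<sigma> m where "\<sigma> \<in> \<Sigma>" "D \<subseteq> \<sigma>" "\<forall>v\<in>\<tau>. m \<bullet> v = 0"
    "\<forall>v\<in>R. v \<notin> \<tau> \<and> insert v \<tau> \<in> \<Sigma> \<longrightarrow> m \<bullet> v \<le> 1"
    "\<forall>v\<in>R. v \<notin> \<sigma> \<and> insert v \<tau> \<in> \<Sigma> \<longrightarrow> m \<bullet> v < 1"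
    "(\<Sum>v\<in>D - \<tau>. d v) = (\<Sum>x\<in>P. m \<bullet> x)"
proof -
  obtain \<sigma> where \<sigma>: "\<sigma> \<in> \<Sigma>" "D \<subseteq> \<sigma>" "lattice_basis \<sigma>"
    using repr cone_subset_lattice_basis unfolding star_repr_def by blast
  have D: "D \<in> \<Sigma>" "\<tau> \<subseteq> D" "finite D" using repr finite_cone unfolding star_repr_def by auto
  have "\<tau> \<in> \<Sigma>" using prim unfolding star_primitive_def by blast
  moreover have "max_cone \<Sigma> \<sigma>" using \<sigma>(1,3) unfolding max_cone_def lattice_basis_def by blast
  moreover have "\<tau> \<subseteq> \<sigma>" using D(2) \<sigma>(2) by blast
  ultimately obtain m where m: "\<forall>v\<in>\<tau>. m \<bullet> v = 0" "\<forall>v\<in>\<sigma> - \<tau>. m \<bullet> v = 1"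
    "\<forall>v\<in>R. v \<notin> \<tau> \<and> insert v \<tau> \<in> \<Sigma> \<longrightarrow> m \<bullet> v \<le> 1"
    "\<forall>v\<in>R. v \<notin> \<sigma> \<and> insert v \<tau> \<in> \<Sigma> \<longrightarrow> m \<bullet> v < 1"
    by (rule fano_functional)
  have "(\<Sum>x\<in>P. m \<bullet> x) = m \<bullet> (\<Sum>x\<in>P. x)" by (simp add: inner_sum_right)
  also have "\<dots> = (\<Sum>v\<in>D. d v * (m \<bullet> v))" using repr by (simp add: star_repr_def inner_sum_right)
  also have "\<dots> = (\<Sum>v\<in>D - \<tau>. d v * (m \<bullet> v)) + (\<Sum>v\<in>\<tau>. d v * (m \<bullet> v))"
    using sum.subset_diff[OF D(2,3)] .
  also have "\<dots> = (\<Sum>v\<in>D - \<tau>. d v)"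
    using m(1,2) \<sigma>(2) by (auto intro!: sum.cong)
  finally show thesis using that[OF \<sigma>(1,2) m(1,3,4)] by (simp only: eq_commute)
qed

lemma star_primitive_pair_weight_le_1:
  assumes prim: "star_primitive \<tau> P" "card P = 2" and repr: "star_repr \<tau> (\<Sum>x\<in>P. x) D d"
  shows "(\<Sum>v\<in>D - \<tau>. d v) \<le> 1"
proof -
  obtain \<sigma> m where \<sigma>: "\<sigma> \<in> \<Sigma>" "D \<subseteq> \<sigma>" and "\<forall>v\<in>\<tau>. m \<bullet> v = 0"
    and m: "\<forall>v\<in>R. v \<notin> \<tau> \<and> insert v \<tau> \<in> \<Sigma> \<longrightarrow> m \<bullet> v \<le> 1"
      "\<forall>v\<in>R. v \<notin> \<sigma> \<and> insert v \<tau> \<in> \<Sigma> \<longrightarrow> m \<bullet> v < 1"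
    and weight: "(\<Sum>v\<in>D - \<tau>. d v) = (\<Sum>x\<in>P. m \<bullet> x)"
    by (rule star_primitive_fano_functional[OF prim(1) repr])
  have "P \<subseteq> R" "P \<union> \<tau> \<notin> \<Sigma>" using prim(1) unfolding star_primitive_def by blast+
  have star_ray: "x \<in> R" "x \<notin> \<tau>" "insert x \<tau> \<in> \<Sigma>" if "x \<in> P" for x
    using star_primitive_insert_cone[OF prim(1) _ that] prim(2) \<open>P \<subseteq> R\<close> that by auto
  obtain x1 x2 where P: "P = {x1, x2}" "x1 \<noteq> x2" using prim(2) by (meson card_2_iff)
  have "\<not> P \<subseteq> \<sigma>"
  proof
    assume "P \<subseteq> \<sigma>"
    then have "P \<union> \<tau> \<subseteq> \<sigma>" using \<sigma>(2) repr unfolding star_repr_def by blast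
    then show False using face_cone[OF \<sigma>(1)] \<open>P \<union> \<tau> \<notin> \<Sigma>\<close> by blast
  qed
  then obtain x where "x \<in> P" "x \<notin> \<sigma>" by blast
  then have "m \<bullet> x < 1" using m(2) star_ray by blast
  moreover have "m \<bullet> x1 \<le> 1" "m \<bullet> x2 \<le> 1" using m(1) star_ray P(1) by auto
  ultimately have "(\<Sum>x\<in>P. m \<bullet> x) < 2" using \<open>x \<in> P\<close> P by auto
  moreover have "(\<Sum>v\<in>D - \<tau>. d v) \<in> \<int>"
    using star_repr_int_coeffs[OF repr \<open>P \<subseteq> R\<close>] by (intro Ints_sum) blast
  ultimately show ?thesis using weight by (auto elim!: Ints_cases)
qed

lemma inner_sum_le_star_repr_remove:
  assumes prim: "star_primitive \<tau> P" "2 \<le> card P" "x \<in> P"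
    and repr_x: "star_repr (insert x \<tau>) (\<Sum>y\<in>P - {x}. y) E e"
    and weight_x: "(\<Sum>v\<in>E - insert x \<tau>. e v) \<le> 1"
    and m: "\<forall>v\<in>\<tau>. m \<bullet> v = 0" "\<forall>v\<in>R. v \<notin> \<tau> \<and> insert v \<tau> \<in> \<Sigma> \<longrightarrow> m \<bullet> v \<le> 1"
  shows "(\<Sum>y\<in>P. m \<bullet> y) \<le> 1 + (1 + e x) * (m \<bullet> x)"
proof -
  have E: "E \<in> \<Sigma>" "insert x \<tau> \<subseteq> E" "finite E" using repr_x finite_cone unfolding star_repr_def by auto
  have "(\<Sum>v\<in>E - insert x \<tau>. e v * (m \<bullet> v)) \<le> (\<Sum>v\<in>E - insert x \<tau>. e v)"
  proof (rule sum_mono)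
    fix v assume v: "v \<in> E - insert x \<tau>"
    have "insert v \<tau> \<subseteq> E" using v E(2) by blast
    then have "insert v \<tau> \<in> \<Sigma>" using face_cone[OF E(1)] by blast
    moreover have "v \<in> R" using cone_subset_rays[OF E(1)] v by blast
    ultimately have "m \<bullet> v \<le> 1" using m(2) v by blast
    moreover have "0 < e v" using repr_x v unfolding star_repr_def by blast
    ultimately show "e v * (m \<bullet> v) \<le> e v" by (simp add: mult_left_le)
  qed
  moreover have "(\<Sum>v\<in>insert x \<tau>. e v * (m \<bullet> v)) = e x * (m \<bullet> x)"
    using finite_subset[OF _ E(3)] E(2) star_primitive_insert_cone(1)[OF prim] m(1)
    by (subst sum.insert) auto
  moreover have "m \<bullet> (\<Sum>y\<in>P - {x}. y) = (\<Sum>v\<in>E. e v * (m \<bullet> v))"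
    using repr_x by (simp add: star_repr_def inner_sum_right)
  moreover have "(\<Sum>y\<in>P. m \<bullet> y) = m \<bullet> x + m \<bullet> (\<Sum>y\<in>P - {x}. y)"
    using sum.remove[OF star_primitive_finite[OF prim(1)] prim(3), of "\<lambda>y. m \<bullet> y"]
    by (simp add: inner_sum_right)
  moreover have "(1 + e x) * (m \<bullet> x) = m \<bullet> x + e x * (m \<bullet> x)" by (simp add: algebra_simps)
  ultimately show ?thesis
    using sum.subset_diff[OF E(2,3), of "\<lambda>v. e v * (m \<bullet> v)"] weight_x by linarith
qed

lemma star_primitive_weight_le_1_step:
  assumes prim: "star_primitive \<tau> P" "3 \<le> card P" and repr: "star_repr \<tau> (\<Sum>x\<in>P. x) D d"
    and IH: "\<And>x E e. x \<in> P \<Longrightarrow> star_repr (insert x \<tau>) (\<Sum>y\<in>P - {x}. y) E e \<Longrightarrow>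
      (\<Sum>v\<in>E - insert x \<tau>. e v) \<le> 1"
  shows "(\<Sum>v\<in>D - \<tau>. d v) \<le> 1"
proof -
  obtain \<sigma> m where "\<sigma> \<in> \<Sigma>" "D \<subseteq> \<sigma>"
    and m: "\<forall>v\<in>\<tau>. m \<bullet> v = 0" "\<forall>v\<in>R. v \<notin> \<tau> \<and> insert v \<tau> \<in> \<Sigma> \<longrightarrow> m \<bullet> v \<le> 1"
    and "\<forall>v\<in>R. v \<notin> \<sigma> \<and> insert v \<tau> \<in> \<Sigma> \<longrightarrow> m \<bullet> v < 1"
    and weight: "(\<Sum>v\<in>D - \<tau>. d v) = (\<Sum>x\<in>P. m \<bullet> x)"
    by (rule star_primitive_fano_functional[OF prim(1) repr])
  have card: "2 \<le> card P" using prim(2) by simp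
  have "\<forall>x\<in>P. \<exists>E e. star_repr (insert x \<tau>) (\<Sum>y\<in>P - {x}. y) E e"
    using exists_star_repr star_primitive_insert_cone(2)[OF prim(1) card] by metis
  then obtain E e where repr_x: "\<And>x. x \<in> P \<Longrightarrow> star_repr (insert x \<tau>) (\<Sum>y\<in>P - {x}. y) (E x) (e x)"
    by metis
  have bound: "(\<Sum>v\<in>D - \<tau>. d v) \<le> 1 + (1 + e x x) * (m \<bullet> x)" if "x \<in> P" for x
    using inner_sum_le_star_repr_remove[OF prim(1) card that repr_x[OF that] IH[OF that repr_x[OF that]] m]
      weight by simp
  show ?thesis
  proof (cases "\<exists>x\<in>P. 0 \<le> 1 + e x x")
    case True
    then obtain x where x: "x \<in> P" "0 \<le> 1 + e x x" by blast
    show ?thesis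
      by (rule star_primitive_weight_le_1_of_remove[OF prim(1) card x(1) repr repr_x[OF x(1)]
            IH[OF x(1) repr_x[OF x(1)]] x(2)])
  next
    case False
    show ?thesis
    proof (rule ccontr)
      assume heavy: "\<not> (\<Sum>v\<in>D - \<tau>. d v) \<le> 1"
      have "m \<bullet> x < 0" if "x \<in> P" for x
      proof -
        have "0 < (1 + e x x) * (m \<bullet> x)" using bound[OF that] heavy by linarith
        then show ?thesis using False that by (auto simp: zero_less_mult_iff)
      qed
      then have "(\<Sum>x\<in>P. m \<bullet> x) \<le> 0" by (simp add: sum_nonpos less_imp_le)
      then show False using weight heavy by linarith
    qed
  qed
qed

lemma star_primitive_weight_le_1:
  assumes "star_primitive \<tau> P" "2 \<le> card P" "star_repr \<tau> (\<Sum>x\<in>P. x) D d"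
  shows "(\<Sum>v\<in>D - \<tau>. d v) \<le> 1"
  using assms
proof (induction "card P" arbitrary: \<tau> P D d rule: less_induct)
  case less
  show ?case
  proof (cases "card P = 2")
    case True
    then show ?thesis using star_primitive_pair_weight_le_1 less.prems(1,3) by blast
  next
    case False
    then have "3 \<le> card P" using less.prems(2) by linarith
    moreover have "(\<Sum>v\<in>E - insert x \<tau>. e v) \<le> 1"
      if x: "x \<in> P" and repr_x: "star_repr (insert x \<tau>) (\<Sum>y\<in>P - {x}. y) E e" for x E e
    proof (rule less.hyps)
      have "finite P" using star_primitive_finite[OF less.prems(1)] .
      then show "card (P - {x}) < card P" "2 \<le> card (P - {x})"
        using x \<open>3 \<le> card P\<close> by (simp_all add: card_Diff1_less)
      show "star_primitive (insert x \<tau>) (P - {x})"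
        using star_primitive_remove[OF less.prems(1,2) x] .
    qed (rule repr_x)
    ultimately show ?thesis using star_primitive_weight_le_1_step less.prems(1,3) by blast
  qed
qed

lemma primitive_set_sum:
  assumes "primitive_set R \<Sigma> P"
  shows "(\<Sum>x\<in>P. x) = 0 \<or> (\<exists>y\<in>R. (\<Sum>x\<in>P. x) = y)"
proof -
  have prim: "star_primitive {} P" using assms primitive_set_iff_star_primitive by blast
  obtain D d where repr: "star_repr {} (\<Sum>x\<in>P. x) D d" using exists_star_repr[OF empty_cone] by blast
  have "P \<subseteq> R" using assms unfolding primitive_set_def by blast
  have "sum d D \<le> 1"
    using star_primitive_weight_le_1[OF prim primitive_set_card_ge_2[OF assms] repr] by simp
  moreover have "\<forall>v\<in>D. d v \<in> \<int> \<and> 0 < d v"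
    using star_repr_int_coeffs[OF repr \<open>P \<subseteq> R\<close>] repr unfolding star_repr_def by simp
  moreover have "D \<in> \<Sigma>" "finite D" "(\<Sum>x\<in>P. x) = (\<Sum>v\<in>D. d v *\<^sub>R v)"
    using repr finite_cone unfolding star_repr_def by auto
  ultimately show ?thesis
    using pos_Ints_sum_le_1_cases[of D d] cone_subset_rays by fastforce
qed

lemma primitive_sum_notin_min_weight_repr:
  assumes "finite S" "\<forall>v\<in>S. 0 \<le> c v" "(\<Sum>v\<in>S. c v *\<^sub>R v) = p"
    and min: "\<And>c'. \<forall>v\<in>S. 0 \<le> c' v \<Longrightarrow> (\<Sum>v\<in>S. c' v *\<^sub>R v) = p \<Longrightarrow> sum c S \<le> sum c' S"
    and "P \<subseteq> S" "\<forall>v\<in>P. 0 < c v" and prim: "primitive_set R \<Sigma> P"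
  shows "(\<Sum>x\<in>P. x) \<in> R - S"
proof -
  have "\<not> ((\<Sum>x\<in>P. x) = 0 \<or> (\<Sum>x\<in>P. x) \<in> S)"
  proof
    assume "(\<Sum>x\<in>P. x) = 0 \<or> (\<Sum>x\<in>P. x) \<in> S"
    then obtain e where e: "\<forall>v\<in>S. 0 \<le> e v" "(\<Sum>x\<in>P. x) = (\<Sum>v\<in>S. e v *\<^sub>R v)" "sum e S \<le> 1"
      by (rule zero_or_member_repr_weight_le_1[OF assms(1)])
    from min_weight_repr_subset_weight_ge_card[OF assms(1-6) e(1,2)]
    have "real (card P) \<le> 1" using e(3) by linarith
    then show False using primitive_set_card_ge_2[OF prim] by simp
  qed
  then show ?thesis using primitive_set_sum[OF prim] by blast
qed

end

theorem lemma3p3: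
  fixes R :: "(real^'n) set" and \<Sigma> :: "(real^'n) set set" and \<rho> :: "real^'n"
  assumes "smooth_complete_fan R \<Sigma>"
    and "toric_fano R \<Sigma>"
    and "all_toric_subvarieties_fano R \<Sigma>"
    and "\<rho> \<in> R"
    and "\<rho> \<in> pos_hull (R - {\<rho>})"
  shows "exceptional R \<Sigma> \<rho>"
proof -
  interpret fano_fan R \<Sigma> using assms(1,3) by unfold_locales
  \<comment> \<open>Fano-ness of X itself, \<open>assms(2)\<close>, is the case \<open>\<tau> = {}\<close> of \<open>assms(3)\<close>.\<close>
  define S0 where "S0 = R - {\<rho>}"
  have "finite S0" using finite_rays unfolding S0_def by simp
  obtain c0 where "\<forall>v\<in>S0. 0 \<le> c0 v" "(\<Sum>v\<in>S0. c0 v *\<^sub>R v) = \<rho>"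
    using assms(5) unfolding pos_hull_def S0_def by auto
  then obtain c where c: "\<forall>v\<in>S0. 0 \<le> c v" "(\<Sum>v\<in>S0. c v *\<^sub>R v) = \<rho>"
    and c_min: "\<And>c'. \<forall>v\<in>S0. 0 \<le> c' v \<Longrightarrow> (\<Sum>v\<in>S0. c' v *\<^sub>R v) = \<rho> \<Longrightarrow> sum c S0 \<le> sum c' S0"
    using exists_min_weight_repr[OF \<open>finite S0\<close>] by blast
  define S where "S = {v\<in>S0. 0 < c v}"
  have S: "S \<subseteq> S0" "\<forall>v\<in>S. 0 < c v" "\<forall>v\<in>S. 0 \<le> c v" by (auto simp: S_def)
  have "(\<Sum>v\<in>S. c v *\<^sub>R v) = \<rho>"
    using c \<open>finite S0\<close> by (auto simp: S_def less_le intro!: sum.mono_neutral_left)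
  then obtain P where "P \<subseteq> S" and prim: "primitive_set R \<Sigma> P"
    by (rule exists_primitive_subset_of_support[OF assms(4) S(1)[unfolded S0_def] S(3)])
  moreover have "P \<subseteq> S0" "\<forall>v\<in>P. 0 < c v" using \<open>P \<subseteq> S\<close> S by auto
  ultimately have "(\<Sum>x\<in>P. x) \<in> R - S0"
    by (intro primitive_sum_notin_min_weight_repr[OF \<open>finite S0\<close> c c_min])
  then have "(\<Sum>x\<in>P. x) = \<rho>" by (auto simp: S0_def)
  then show ?thesis using prim assms(4) unfolding exceptional_def by blast
qed

end
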